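(* Let $I\ge1$, let $u_0,\dots,u_{I-1}\ge 0$, $c_0,\dots,c_{I-1}\ge0$, $u_I,c_I\in\mathbb R$, $k_0,\dots,k_{I-1}>0$, and let $(S_I(t))_{t\ge0}$ be an arbitrary real-valued process. Set $X_I(t)=u_I+c_It-S_I(t)$, $L_I(t)=-\min(\inf_{s\le t}X_I(s),0)$, and recursively for $i=I-1,I-2,\dots,0$: $$Y_i(t)=u_i+c_it-k_iL_{i+1}(t),\qquad L_i(t)=-\min\Big(\inf_{s\le t}Y_i(s),0\Big)\ (i\ge1).$$ Let $\tau_0=\inf\{t\ge0:Y_0(t)<0\}$. Define $$U=\sum_{i=0}^{I}\frac{u_i}{k_i k_{i+1}\cdots k_{I-1}},\qquad C=\sum_{i=0}^{I}\frac{c_i}{k_ik_{i+1}\cdots k_{I-1}}$$ (the empty product for $i=I$ being $1$). Then $\tau_0=\inf\{t\ge0: U+Ct-S_I(t)<0\}$ pathwise; consequently for all $t>0$, $$P(\tau_0<t)=\Psi_I\Big(t;\ \tfrac{u_0}{k_0\cdots k_{I-1}}+\tfrac{u_1}{k_1\cdots k_{I-1}}+\dots+u_I,\ \tfrac{c_0}{k_0\cdots k_{I-1}}+\tfrac{c_1}{k_1\cdots k_{I-1}}+\dots+c_I\Big),$$ where $\Psi_I(t;u,c)=P(\inf\{s\ge0:u+cs-S_I(s)<0\}<t)$ is the finite-time ruin probability of the last subsidiary in the chain with initial reserve $u$ and premium rate $c$.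
   Context: Linear (hierarchical) chain of central branches $X_0,\dots,X_{I-1}$, each a deterministic drift $u_i+c_it$ in isolation; branch $i$ bails out branch $i+1$ by minimal regulation, paying proportional cost $k_i$ per unit of bail-out. $Y_i$ is the (unregulated) reserve of branch $i$ after its bail-out payments, $L_i$ its bail-out regulator, and the ruin of the network is the ruin time $\tau_0$ of the top branch $X_0$. *)

theory Defs
  imports "HOL-Probability.Probability"
begin

text \<open>Running infimum over [0,t] (in the extended reals, so that it is
always well defined for an arbitrary path).\<close>
definition run_inf :: "(real \<Rightarrow> ereal) \<Rightarrow> real \<Rightarrow> ereal" where
  "run_inf f t = (INF s\<in>{0..t}. f s)"

definition regulator :: "(real \<Rightarrow> ereal) \<Rightarrow> real \<Rightarrow> ereal" where
  "regulator f t = - min (run_inf f t) 0"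

text \<open>Ruin time inf{t >= 0 : f t < 0}, with inf of the empty set = infinity.\<close>
definition ruin_time :: "(real \<Rightarrow> ereal) \<Rightarrow> ereal" where
  "ruin_time f = (INF t\<in>{t. 0 \<le> t \<and> f t < 0}. ereal t)"

definition branch_Y :: "(nat \<Rightarrow> real) \<Rightarrow> (nat \<Rightarrow> real) \<Rightarrow> (nat \<Rightarrow> real) \<Rightarrow> nat
    \<Rightarrow> (real \<Rightarrow> ereal) \<Rightarrow> real \<Rightarrow> ereal" where
  "branch_Y u c k i Lnext t = ereal (u i + c i * t) - ereal (k i) * Lnext t"

text \<open>bail_L I u c k S m is the regulator L_{I-m} (for m <= I-1):
  L_I is the regulator of X_I(t) = u_I + c_I t - S(t), and
  L_i is the regulator of Y_i for 1 <= i < I.\<close>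
fun bail_L :: "nat \<Rightarrow> (nat \<Rightarrow> real) \<Rightarrow> (nat \<Rightarrow> real) \<Rightarrow> (nat \<Rightarrow> real)
    \<Rightarrow> (real \<Rightarrow> real) \<Rightarrow> nat \<Rightarrow> real \<Rightarrow> ereal" where
  "bail_L I u c k S 0 = regulator (\<lambda>t. ereal (u I + c I * t - S t))"
| "bail_L I u c k S (Suc m) =
     regulator (branch_Y u c k (I - Suc m) (bail_L I u c k S m))"

definition top_Y :: "nat \<Rightarrow> (nat \<Rightarrow> real) \<Rightarrow> (nat \<Rightarrow> real) \<Rightarrow> (nat \<Rightarrow> real)
    \<Rightarrow> (real \<Rightarrow> real) \<Rightarrow> real \<Rightarrow> ereal" where
  "top_Y I u c k S = branch_Y u c k 0 (bail_L I u c k S (I - 1))"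

definition finite_time_ruin_prob :: "'w measure \<Rightarrow> ('w \<Rightarrow> real \<Rightarrow> real)
    \<Rightarrow> real \<Rightarrow> real \<Rightarrow> real \<Rightarrow> real" where
  "finite_time_ruin_prob M S t u c =
     measure M {\<omega>\<in>space M. ruin_time (\<lambda>s. ereal (u + c * s - S \<omega> s)) < ereal t}"

end

theory Submission
  imports Defs
begin

text \<open>Minimal regulation has a simple threshold description: the regulator of a path exceeds
  a level \<open>b \<ge> 0\<close> at time \<open>t\<close> iff the path has gone below \<open>-b\<close> before \<open>t\<close>. Bailing out a branch
  whose regulator is that of a real path \<open>W\<close> therefore costs its parent exactly as much as
  if the parent simply owned the merged reserve \<open>u + c s + k W(s)\<close> (this uses
  \<open>u, c \<ge> 0\<close>: the parent's own reserve is smallest at the start of any time interval). By induction down the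
  chain, the regulator of each branch is the regulator of its merged reserve, and the top
  branch is ruined exactly when the fully merged reserve, a positive multiple of
  \<open>U + C t - S(t)\<close>, goes negative.\<close>

lemma regulator_greater_iff:
  assumes "b \<ge> 0"
  shows "ereal b < regulator f t \<longleftrightarrow> (\<exists>s\<in>{0..t}. f s < ereal (- b))"
proof -
  have "ereal b < regulator f t \<longleftrightarrow> run_inf f t < ereal (- b)"
    unfolding regulator_def using assms
    by (cases "run_inf f t") (auto simp: min_def ereal_uminus_less_reorder)
  also have "\<dots> \<longleftrightarrow> (\<exists>s\<in>{0..t}. f s < ereal (- b))"
    unfolding run_inf_def by (simp add: INF_less_iff)
  finally show ?thesis .
qed

lemma regulator_nonneg: "0 \<le> regulator f t"
  by (simp add: regulator_def)

lemma regulator_eqI: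
  assumes "\<And>b t. b \<ge> 0 \<Longrightarrow>
      (\<exists>s\<in>{0..t}. f s < ereal (- b)) \<longleftrightarrow> (\<exists>s\<in>{0..t}. g s < ereal (- b))"
  shows "regulator f = regulator g"
proof
  fix t
  have le: "regulator f' t \<le> regulator g' t"
    if greater_iff: "\<And>b. b \<ge> 0 \<Longrightarrow> ereal b < regulator f' t \<longleftrightarrow> ereal b < regulator g' t"
    for f' g'
  proof (rule ccontr)
    assume "\<not> regulator f' t \<le> regulator g' t"
    then have "regulator g' t < regulator f' t"
      by simp
    then obtain b where b: "regulator g' t < ereal b" "ereal b < regulator f' t"
      using ereal_dense2 by blast
    have "b \<ge> 0"
      using le_less_trans[OF regulator_nonneg b(1)] by simp
    then show False
      using b greater_iff[of b] by simp
  qed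
  have "ereal b < regulator f t \<longleftrightarrow> ereal b < regulator g t" if "b \<ge> 0" for b
    using assms[OF that] by (simp add: regulator_greater_iff[OF that])
  then have "regulator f t \<le> regulator g t" "regulator g t \<le> regulator f t"
    by (auto intro: le)
  then show "regulator f t = regulator g t"
    by (rule antisym)
qed

lemma branch_Y_less_iff:
  assumes "k i > 0"
  shows "branch_Y u c k i L t < ereal (- b) \<longleftrightarrow> ereal ((u i + c i * t + b) / k i) < L t"
proof (cases "L t")
  case (real l)
  have "u i + c i * t - k i * l < - b \<longleftrightarrow> (u i + c i * t + b) / k i < l"
    using assms by (simp add: field_simps)
  then show ?thesis using real by (simp add: branch_Y_def)
qed (use assms in \<open>simp_all add: branch_Y_def\<close>)

lemma branch_Y_regulator_less_iff:
  assumes "k i > 0" "u i \<ge> 0" "c i \<ge> 0" "t \<ge> 0" "b \<ge> 0"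
  shows "branch_Y u c k i (regulator (\<lambda>s. ereal (W s))) t < ereal (- b)
     \<longleftrightarrow> (\<exists>s\<in>{0..t}. u i + c i * t + k i * W s < - b)"
proof -
  have threshold_nonneg: "(u i + c i * t + b) / k i \<ge> 0"
    using assms by simp
  have "ereal (W s) < ereal (- ((u i + c i * t + b) / k i))
      \<longleftrightarrow> u i + c i * t + k i * W s < - b" for s
    using assms(1) by (simp add: field_simps)
  then show ?thesis
    using assms(1) by (simp only: branch_Y_less_iff regulator_greater_iff[OF threshold_nonneg])
qed

lemma regulator_branch_Y:
  assumes "k i > 0" "u i \<ge> 0" "c i \<ge> 0"
  shows "regulator (branch_Y u c k i (regulator (\<lambda>s. ereal (W s))))
     = regulator (\<lambda>s. ereal (u i + c i * s + k i * W s))"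
proof (rule regulator_eqI)
  fix b t :: real
  assume b: "b \<ge> 0"
  have "(\<exists>t'\<in>{0..t}. \<exists>s\<in>{0..t'}. u i + c i * t' + k i * W s < - b)
     \<longleftrightarrow> (\<exists>s\<in>{0..t}. u i + c i * s + k i * W s < - b)"
  proof
    assume "\<exists>t'\<in>{0..t}. \<exists>s\<in>{0..t'}. u i + c i * t' + k i * W s < - b"
    then obtain t' s where "t' \<in> {0..t}" "s \<in> {0..t'}" "u i + c i * t' + k i * W s < - b"
      by blast
    moreover from this have "c i * s \<le> c i * t'"
      using assms(3) by (simp add: mult_left_mono)
    ultimately show "\<exists>s\<in>{0..t}. u i + c i * s + k i * W s < - b"
      by (intro bexI[of _ s]) auto
  qed fastforce
  then show "(\<exists>s\<in>{0..t}. branch_Y u c k i (regulator (\<lambda>s. ereal (W s))) s < ereal (- b))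
     \<longleftrightarrow> (\<exists>s\<in>{0..t}. ereal (u i + c i * s + k i * W s) < ereal (- b))"
    using assms b by (auto simp: branch_Y_regulator_less_iff algebra_simps)
qed

lemma ruin_time_eqI:
  assumes "\<And>t. t \<ge> 0 \<Longrightarrow> f t < 0 \<Longrightarrow> \<exists>s\<in>{0..t}. g s < 0"
    and "\<And>t. t \<ge> 0 \<Longrightarrow> g t < 0 \<Longrightarrow> f t < 0"
  shows "ruin_time f = ruin_time g"
  unfolding ruin_time_def
proof (rule antisym)
  show "(INF t\<in>{t. 0 \<le> t \<and> f t < 0}. ereal t) \<le> (INF t\<in>{t. 0 \<le> t \<and> g t < 0}. ereal t)"
    by (rule INF_superset_mono) (use assms(2) in auto)
next
  show "(INF t\<in>{t. 0 \<le> t \<and> g t < 0}. ereal t) \<le> (INF t\<in>{t. 0 \<le> t \<and> f t < 0}. ereal t)"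
  proof (rule INF_greatest)
    fix t assume "t \<in> {t. 0 \<le> t \<and> f t < 0}"
    then obtain s where s: "s \<in> {0..t}" "g s < 0"
      using assms(1) by blast
    then have "(INF t\<in>{t. 0 \<le> t \<and> g t < 0}. ereal t) \<le> ereal s"
      by (intro INF_lower) auto
    also have "\<dots> \<le> ereal t" using s by simp
    finally show "(INF t\<in>{t. 0 \<le> t \<and> g t < 0}. ereal t) \<le> ereal t" .
  qed
qed

lemma ruin_time_branch_Y:
  assumes "k i > 0" "u i \<ge> 0" "c i \<ge> 0"
  shows "ruin_time (branch_Y u c k i (regulator (\<lambda>s. ereal (W s))))
     = ruin_time (\<lambda>s. ereal (u i + c i * s + k i * W s))"
proof (rule ruin_time_eqI)
  fix t :: real
  assume t: "t \<ge> 0"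
  note less_iff = branch_Y_regulator_less_iff[where u = u and c = c and k = k and b = 0 and W = W,
      OF assms t order_refl]
  show "\<exists>s\<in>{0..t}. ereal (u i + c i * s + k i * W s) < 0"
    if "branch_Y u c k i (regulator (\<lambda>s. ereal (W s))) t < 0"
  proof -
    have "\<exists>s\<in>{0..t}. u i + c i * t + k i * W s < 0"
      using that less_iff by (simp add: zero_ereal_def)
    then obtain s where "s \<in> {0..t}" "u i + c i * t + k i * W s < 0"
      by blast
    moreover from this have "c i * s \<le> c i * t"
      using assms(3) by (simp add: mult_left_mono)
    ultimately show ?thesis by (intro bexI[of _ s]) auto
  qed
  show "branch_Y u c k i (regulator (\<lambda>s. ereal (W s))) t < 0"
    if "ereal (u i + c i * t + k i * W t) < 0"
  proof -
    have "\<exists>s\<in>{0..t}. u i + c i * t + k i * W s < 0"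
      using that t by (intro bexI[of _ t]) auto
    then show ?thesis
      using less_iff by (simp add: zero_ereal_def)
  qed
qed

lemma ruin_time_scale:
  assumes "a > 0"
  shows "ruin_time (\<lambda>s. ereal (a * f s)) = ruin_time (\<lambda>s. ereal (f s))"
  using assms by (simp add: ruin_time_def mult_less_0_iff)

text \<open>\<open>merged_reserve I u c k S m\<close> is the reserve of branch \<open>I - m\<close> after absorbing all
  branches below it, with one unit of loss of branch \<open>i + 1\<close> costing \<open>k i\<close> units of branch \<open>i\<close>.\<close>

fun merged_reserve :: "nat \<Rightarrow> (nat \<Rightarrow> real) \<Rightarrow> (nat \<Rightarrow> real) \<Rightarrow> (nat \<Rightarrow> real)
    \<Rightarrow> (real \<Rightarrow> real) \<Rightarrow> nat \<Rightarrow> real \<Rightarrow> real" where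
  "merged_reserve I u c k S 0 s = u I + c I * s - S s"
| "merged_reserve I u c k S (Suc m) s =
     u (I - Suc m) + c (I - Suc m) * s + k (I - Suc m) * merged_reserve I u c k S m s"

lemma bail_L_eq_regulator_merged_reserve:
  assumes "m < I"
    and "\<And>i. i < I \<Longrightarrow> u i \<ge> 0" "\<And>i. i < I \<Longrightarrow> c i \<ge> 0" "\<And>i. i < I \<Longrightarrow> k i > 0"
  shows "bail_L I u c k S m = regulator (\<lambda>s. ereal (merged_reserve I u c k S m s))"
  using assms(1)
proof (induction m)
  case 0
  then show ?case by simp
next
  case (Suc m)
  then show ?case
    using assms(2-4)[of "I - Suc m"] by (simp add: regulator_branch_Y)
qed

lemma merged_reserve_closed_form:
  assumes "m \<le> I" "\<And>i. i < I \<Longrightarrow> k i > 0"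
  shows "merged_reserve I u c k S m s = (\<Prod>j\<in>{I-m..<I}. k j) *
     ((\<Sum>i\<in>{I-m..I}. (u i + c i * s) / (\<Prod>j\<in>{i..<I}. k j)) - S s)"
  using assms(1)
proof (induction m)
  case 0
  then show ?case by simp
next
  case (Suc m)
  define i where "i = I - Suc m"
  have i: "i < I" "I - m = Suc i" "I - Suc m = i"
    using Suc.prems i_def by auto
  define P where "P = (\<Prod>j\<in>{Suc i..<I}. k j)"
  define R where "R = (\<Sum>l\<in>{Suc i..I}. (u l + c l * s) / (\<Prod>j\<in>{l..<I}. k j))"
  have prod_split: "(\<Prod>j\<in>{i..<I}. k j) = k i * P"
    using i by (simp add: P_def prod.atLeast_Suc_lessThan)
  have sum_split: "(\<Sum>l\<in>{i..I}. (u l + c l * s) / (\<Prod>j\<in>{l..<I}. k j))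
      = (u i + c i * s) / (k i * P) + R"
    using i by (simp add: R_def prod_split sum.atLeast_Suc_atMost)
  have "k i > 0" "P > 0"
    unfolding P_def using assms(2) i by (auto intro: prod_pos)
  have "merged_reserve I u c k S (Suc m) s = u i + c i * s + k i * (P * (R - S s))"
    using Suc by (simp add: i P_def R_def)
  also have "\<dots> = (k i * P) * ((u i + c i * s) / (k i * P) + R - S s)"
    using \<open>k i > 0\<close> \<open>P > 0\<close> by (simp add: field_simps)
  finally show ?case
    by (simp add: i prod_split sum_split)
qed

theorem mainTheorem3:
  fixes I :: nat and u c k :: "nat \<Rightarrow> real"
    and M :: "'w measure" and S :: "'w \<Rightarrow> real \<Rightarrow> real"
  assumes "I \<ge> 1"
    and "\<And>i. i < I \<Longrightarrow> u i \<ge> 0"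
    and "\<And>i. i < I \<Longrightarrow> c i \<ge> 0"
    and "\<And>i. i < I \<Longrightarrow> k i > 0"
    and "prob_space M"
    and "\<And>s. (\<lambda>\<omega>. S \<omega> s) \<in> borel_measurable M"
  defines "U \<equiv> (\<Sum>i\<le>I. u i / (\<Prod>j\<in>{i..<I}. k j))"
    and "C \<equiv> (\<Sum>i\<le>I. c i / (\<Prod>j\<in>{i..<I}. k j))"
  shows "(\<forall>\<omega>. ruin_time (top_Y I u c k (S \<omega>))
                = ruin_time (\<lambda>t. ereal (U + C * t - S \<omega> t)))
       \<and> (\<forall>t>0. measure M {\<omega>\<in>space M. ruin_time (top_Y I u c k (S \<omega>)) < ereal t}
                = finite_time_ruin_prob M S t U C)"
proof -
  have UC: "U + C * s = (\<Sum>i\<in>{0..I}. (u i + c i * s) / (\<Prod>j\<in>{i..<I}. k j))" for s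
    unfolding U_def C_def atLeast0AtMost
    by (simp add: sum_distrib_right add_divide_distrib sum.distrib)
  have top_merged: "merged_reserve I u c k S' I s
      = u 0 + c 0 * s + k 0 * merged_reserve I u c k S' (I - 1) s" for S' s
    using assms(1) by (cases I) auto
  have scale_pos: "(\<Prod>j\<in>{0..<I}. k j) > 0"
    using assms(4) by (intro prod_pos) auto
  have path: "ruin_time (top_Y I u c k (S \<omega>)) = ruin_time (\<lambda>t. ereal (U + C * t - S \<omega> t))"
    for \<omega>
  proof -
    have "top_Y I u c k (S \<omega>)
        = branch_Y u c k 0 (regulator (\<lambda>s. ereal (merged_reserve I u c k (S \<omega>) (I - 1) s)))"
      using assms(1-4) by (simp add: top_Y_def bail_L_eq_regulator_merged_reserve)
    then have "ruin_time (top_Y I u c k (S \<omega>))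
        = ruin_time (\<lambda>s. ereal (merged_reserve I u c k (S \<omega>) I s))"
      using assms(1) assms(2-4)[of 0] by (simp add: ruin_time_branch_Y top_merged)
    also have "\<dots> = ruin_time (\<lambda>t. ereal (U + C * t - S \<omega> t))"
      using assms(4) scale_pos
      by (simp add: merged_reserve_closed_form UC ruin_time_scale)
    finally show ?thesis .
  qed
  then show ?thesis
    unfolding finite_time_ruin_prob_def by simp
qed

end
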